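(* In the setting described in the context, assume condition (i). Assume moreover that there is a sequence $(\overline T_n)_n$ with $T_{2n}>\overline T_n$ for all $n$, such that for every $n\in\mathbb N$ and every $T\in(\overline T_n,T_{2n}]$ there is a constant $d_n>0$ (depending on $T$, independent of the data) with $$E_S(t_{2n}+T)\le d_n\int_{t_{2n}}^{t_{2n}+T}\|B_1^*(t)w_t(t)\|_{U_1}^2\,dt$$ for every weak solution $w$ of $w_{tt}+Aw+B_1(t)B_1^*(t)w_t=f(w)$ on $(t_{2n},t_{2n+1})$ with $w(t_{2n})=w_0^n\in V$, $w_t(t_{2n})=w_1^n\in H$ (here $E_S$ is the energy of $w$). Then every solution $u$ of $$u_{tt}(t)+Au(t)+B_1(t)B_1^*(t)u_t(t)+B_2(t)B_2^*(t)u_t(t-\tau)=f(u),\ t>0,\qquad u(0)=u_0,\ u_t(0)=u_1,$$ satisfies $E_S(t_{2n+1})\le\hat d_nE_S(t_{2n})$ for all $n\in\mathbb N$, where $\hat d_n=\frac{d_n}{d_n+1}$ and $d_n$ is the constant above corresponding to $T=T_{2n}$.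
   Context: $E_S(t)=\frac12(\|u(t)\|_V^2+\|u_t(t)\|_H^2)-\mathcal F(u(t))$. $H$ is a real Hilbert space, $A:\mathcal D(A)\to H$ a densely defined, self-adjoint, positive, coercive linear operator, $V=\mathcal D(A^{1/2})$ with $\|v\|_V=\|A^{1/2}v\|_H$, $V\hookrightarrow H\equiv H'\hookrightarrow V'$ densely. $U_1,U_2$ are real Hilbert spaces, $B_i(t)\in\mathcal L(U_i,H)$ with $B_1^*(t)B_2^*(t)=0$ for $t>0$. There is a sequence $0=t_0<t_1<\cdots$; $I_n=[t_n,t_{n+1})$, $T_n=t_{n+1}-t_n$; $B_2=0$ on $I_{2n}$, $B_1=0$ on $I_{2n+1}$, $B_1\in C^1([t_{2n},t_{2n+1}];\mathcal L(U_1,H))$, $B_2\in C^1([t_{2n+1},t_{2n+2}];\mathcal L(U_2,H))$. $\tau>0$ is the delay. $W$ is a Hilbert space with $\|u\|_W^2\le C\|u\|_H^2$ for $u\in H$. $f:V\to H$ is locally Lipschitz (for each $K>0$ there is $L(K)$ with $\|f(u)-f(v)\|_H\le L(K)\|u-v\|_V$ when $\|u\|_V,\|v\|_V\le K$), $\mathcal F:V\to\mathbb R$ with $\mathcal F(0)=0$, $\mathcal F'(u)v=\langle f(u),v\rangle_{V',V}$. (i): there are $0<m_{2n}\le M_{2n}$ with $m_{2n}\|u\|_W^2\le\|B_1^*(t)u\|_{U_1}^2\le M_{2n}\|u\|_W^2$ for $u\in H$, $t\in I_{2n}$. *)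

theory Defs
  imports "HOL-Analysis.Analysis"
begin

text \<open>A (possibly unbounded) linear operator on a real Hilbert space is modelled by its
domain D and a function T; values of T outside D are irrelevant.\<close>

definition lin_op_on :: "'h::real_inner set \<Rightarrow> ('h \<Rightarrow> 'h) \<Rightarrow> bool" where
  "lin_op_on D T \<longleftrightarrow> subspace D \<and>
     (\<forall>x\<in>D. \<forall>y\<in>D. \<forall>c::real. T (x + c *\<^sub>R y) = T x + c *\<^sub>R T y)"

text \<open>Densely defined and self-adjoint: symmetric and the adjoint domain equals D.\<close>
definition selfadjoint_op :: "'h::real_inner set \<Rightarrow> ('h \<Rightarrow> 'h) \<Rightarrow> bool" where
  "selfadjoint_op D T \<longleftrightarrow> lin_op_on D T \<and> closure D = UNIV \<and>
     (\<forall>x\<in>D. \<forall>y\<in>D. inner (T x) y = inner x (T y)) \<and>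
     (\<forall>y z. (\<forall>x\<in>D. inner (T x) y = inner x z) \<longrightarrow> y \<in> D)"

definition positive_op :: "'h::real_inner set \<Rightarrow> ('h \<Rightarrow> 'h) \<Rightarrow> bool" where
  "positive_op D T \<longleftrightarrow> (\<forall>x\<in>D. x \<noteq> 0 \<longrightarrow> inner (T x) x > 0)"

definition nonneg_op :: "'h::real_inner set \<Rightarrow> ('h \<Rightarrow> 'h) \<Rightarrow> bool" where
  "nonneg_op D T \<longleftrightarrow> (\<forall>x\<in>D. inner (T x) x \<ge> 0)"

definition coercive_op :: "'h::real_inner set \<Rightarrow> ('h \<Rightarrow> 'h) \<Rightarrow> bool" where
  "coercive_op D T \<longleftrightarrow> (\<exists>c>0. \<forall>x\<in>D. inner (T x) x \<ge> c * (norm x)\<^sup>2)"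

definition is_sqrt_op ::
  "'h::real_inner set \<Rightarrow> ('h \<Rightarrow> 'h) \<Rightarrow> 'h set \<Rightarrow> ('h \<Rightarrow> 'h) \<Rightarrow> bool" where
  "is_sqrt_op DA A DR R \<longleftrightarrow> selfadjoint_op DR R \<and> nonneg_op DR R \<and>
     DA = {x\<in>DR. R x \<in> DR} \<and> (\<forall>x\<in>DA. A x = R (R x))"

text \<open>Energy E_S(t) = 1/2 (||u(t)||_V^2 + ||u_t(t)||_H^2) - F(u(t)), with ||v||_V = ||R v||.\<close>
definition energy :: "('h::real_inner \<Rightarrow> 'h) \<Rightarrow> ('h \<Rightarrow> real) \<Rightarrow> (real \<Rightarrow> 'h)
    \<Rightarrow> (real \<Rightarrow> 'h) \<Rightarrow> real \<Rightarrow> real" where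
  "energy R F u ut s = (1/2) * ((norm (R (u s)))\<^sup>2 + (norm (ut s))\<^sup>2) - F (u s)"

text \<open>Weak solution on [a,b] of  u'' + A u + G = f(u), where G(s) is the (given) damping
term: u \<in> C([a,b];V) \<inter> C^1([a,b];H) with derivative ut, and for every test vector v \<in> V,
  <ut(r),v> - <ut(s),v> = \<integral>_s^r ( <f(u),v> - <A^(1/2) u, A^(1/2) v> - <G,v> ).\<close>
definition weak_sol_on :: "'h::{real_inner,complete_space} set \<Rightarrow> ('h \<Rightarrow> 'h) \<Rightarrow> ('h \<Rightarrow> 'h)
    \<Rightarrow> (real \<Rightarrow> 'h) \<Rightarrow> real \<Rightarrow> real \<Rightarrow> (real \<Rightarrow> 'h) \<Rightarrow> (real \<Rightarrow> 'h) \<Rightarrow> bool" where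
  "weak_sol_on DR R f G a b u ut \<longleftrightarrow> a \<le> b \<and>
     (\<forall>s\<in>{a..b}. u s \<in> DR) \<and>
     continuous_on {a..b} u \<and> continuous_on {a..b} (\<lambda>s. R (u s)) \<and>
     (\<forall>s\<in>{a..b}. (u has_vector_derivative ut s) (at s within {a..b})) \<and>
     continuous_on {a..b} ut \<and>
     (\<forall>v\<in>DR. \<forall>s r. a \<le> s \<and> s \<le> r \<and> r \<le> b \<longrightarrow>
        ((\<lambda>\<sigma>. inner (f (u \<sigma>)) v - inner (R (u \<sigma>)) (R v) - inner (G \<sigma>) v)
           has_integral (inner (ut r) v - inner (ut s) v)) {s..r})"

end

theory Submission
  imports Defs
begin

text \<open>On an undelayed interval [t_{2n}, t_{2n+1}] the delayed feedback B2 vanishes, so u is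
there a weak solution of the undelayed damped problem and dissipates energy exactly:
E(t_{2n}) - E(t_{2n+1}) = \<integral> |B1* u_t|^2.  Combined with the observability estimate
E(t_{2n+1}) \<le> d_n \<integral> |B1* u_t|^2 this gives (1 + d_n) E(t_{2n+1}) \<le> d_n E(t_{2n}).

The dissipation identity is the real work, since a weak solution cannot be differentiated twice.
Testing the weak formulation with the increment u(y) - u(x) relates increments of the bilinear
energy form e(\<sigma>, \<rho>) = <u_t \<sigma>, u_t \<rho>> + <A^(1/2) u \<sigma>, A^(1/2) u \<rho>> to the forcing; averaging these
relations over all windows of width \<delta> (Steklov averaging) turns them into the energy balance
up to an error o(\<delta>^2), and letting \<delta> \<rightarrow> 0 gives the identity.  The potential F is handled by a
chain rule along curves that are continuous in V and differentiable in H.\<close>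

lemma abs_inner_diff_le:
  fixes a b c d :: "'a::real_inner"
  assumes "norm b \<le> W1" "norm c \<le> W2" "norm (a - c) \<le> e1" "norm (b - d) \<le> e2"
  shows "\<bar>inner a b - inner c d\<bar> \<le> e1 * W1 + W2 * e2"
proof -
  have "\<bar>inner a b - inner c d\<bar> = \<bar>inner (a - c) b + inner c (b - d)\<bar>"
    by (simp add: inner_diff_left inner_diff_right)
  also have "\<dots> \<le> \<bar>inner (a - c) b\<bar> + \<bar>inner c (b - d)\<bar>"
    by (rule abs_triangle_ineq)
  also have "\<bar>inner (a - c) b\<bar> \<le> e1 * W1"
    using Cauchy_Schwarz_ineq2[of "a - c" b] mult_mono[OF assms(3,1)] assms(3)
      norm_ge_zero[of "a - c"] norm_ge_zero[of b] by linarith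
  also have "\<bar>inner c (b - d)\<bar> \<le> W2 * e2"
    using Cauchy_Schwarz_ineq2[of c "b - d"] mult_mono[OF assms(2,4)] assms(2)
      norm_ge_zero[of "b - d"] norm_ge_zero[of c] by linarith
  finally show ?thesis by simp
qed

lemma zero_if_abs_le_mult_epsilon:
  fixes x K :: real
  assumes "\<And>\<epsilon>. \<epsilon> > 0 \<Longrightarrow> \<bar>x\<bar> \<le> K * \<epsilon>"
  shows "x = 0"
proof -
  have K: "0 \<le> K" using assms[of 1] by simp
  have "\<bar>x\<bar> \<le> 0 + \<epsilon>" if "\<epsilon> > 0" for \<epsilon>
  proof -
    have "\<bar>x\<bar> \<le> K * (\<epsilon> / (K + 1))" using assms[of "\<epsilon> / (K + 1)"] K that by simp
    also have "\<dots> \<le> \<epsilon>" using K that by (simp add: field_simps)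
    finally show ?thesis by simp
  qed
  then show ?thesis using field_le_epsilon[of "\<bar>x\<bar>" 0] by simp
qed

lemma abs_integral_diff_le:
  fixes f g :: "real \<Rightarrow> real"
  assumes "continuous_on {x..y} f" "continuous_on {x..y} g" "x \<le> y"
    and close: "\<And>s. s \<in> {x..y} \<Longrightarrow> \<bar>f s - g s\<bar> \<le> \<eta>"
  shows "\<bar>integral {x..y} f - integral {x..y} g\<bar> \<le> (y - x) * \<eta>"
proof -
  have int: "((\<lambda>s. f s - g s) has_integral integral {x..y} f - integral {x..y} g) {x..y}"
    using assms(1,2) by (intro has_integral_diff integrable_integral integrable_continuous_interval)
  have "0 \<le> \<eta>" using assms(3) close[of x] by auto
  from has_integral_bound_real[OF this finite.emptyI int] close assms(3)
  show ?thesis by (simp add: mult.commute)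
qed

lemma integral_close_to_const:
  fixes g :: "real \<Rightarrow> real"
  assumes "continuous_on {x..y} g" "x \<le> y" "\<And>s. s \<in> {x..y} \<Longrightarrow> \<bar>g s - c\<bar> \<le> \<eta>"
  shows "\<bar>integral {x..y} g - (y - x) * c\<bar> \<le> (y - x) * \<eta>"
  using abs_integral_diff_le[of x y g "\<lambda>s. c" \<eta>] assms by simp

lemma has_integral_triangle:
  fixes d :: real
  assumes "0 \<le> d"
  shows "((\<lambda>q. d - q) has_integral d\<^sup>2 / 2) {0..d}"
proof -
  have "((\<lambda>q. d - q) has_integral (d * d - d\<^sup>2 / 2) - (d * 0 - 0\<^sup>2 / 2)) {0..d}"
    by (rule fundamental_theorem_of_calculus[OF assms])
       (auto intro!: derivative_eq_intros simp: has_real_derivative_iff_has_vector_derivative[symmetric])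
  then show ?thesis by (simp add: power2_eq_square)
qed

lemma has_integral_window_reflect:
  fixes \<phi> :: "real \<Rightarrow> real"
  assumes "continuous_on UNIV \<phi>" "0 \<le> d"
  shows "((\<lambda>q. \<phi> (t - q)) has_integral integral {t-d..t} \<phi>) {0..d}"
proof -
  have "(\<phi> has_integral integral {t-d..t} \<phi>) {t-d..t}"
    by (intro integrable_integral integrable_continuous_interval continuous_on_subset[OF assms(1)]) auto
  then have "((\<lambda>x. \<phi> (- x)) has_integral integral {t-d..t} \<phi>) {-t..-(t-d)}"
    by (simp only: has_integral_reflect_real)
  from has_integral_shift_real_ivl[OF this, of "-t"] show ?thesis
    by (simp add: algebra_simps)
qed

lemma has_integral_window_shift:
  fixes \<phi> :: "real \<Rightarrow> real"
  assumes "continuous_on UNIV \<phi>" "0 \<le> d"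
  shows "((\<lambda>q. \<phi> (t - d + q)) has_integral integral {t-d..t} \<phi>) {0..d}"
proof -
  have "(\<phi> has_integral integral {t-d..t} \<phi>) {t-d..t}"
    by (intro integrable_integral integrable_continuous_interval continuous_on_subset[OF assms(1)]) auto
  from has_integral_shift_real_ivl[OF this, of "t-d"] show ?thesis
    by (simp add: algebra_simps)
qed

lemma has_integral_shift_difference:
  fixes g :: "real \<Rightarrow> real"
  assumes "continuous_on UNIV g" "x \<le> y" "0 \<le> c"
  shows "((\<lambda>s. g s - g (s - c)) has_integral integral {y-c..y} g - integral {x-c..x} g) {x..y}"
proof -
  define P where "P z = integral {x - c..z} g" for z
  have P: "(g has_integral P z' - P z) {z..z'}" if "x - c \<le> z" "z \<le> z'" for z z'
  proof -
    have gi: "g integrable_on {x - c..z'}"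
      by (intro integrable_continuous_interval continuous_on_subset[OF assms(1)]) auto
    have "integral {x - c..z} g + integral {z..z'} g = integral {x - c..z'} g"
      by (rule Henstock_Kurzweil_Integration.integral_combine[OF that gi])
    moreover have "(g has_integral integral {z..z'} g) {z..z'}"
      using integrable_integral integrable_on_subinterval[OF gi] that by auto
    ultimately show ?thesis by (metis P_def add_diff_cancel_left')
  qed
  have unshifted: "(g has_integral P y - P x) {x..y}"
    using assms by (intro P) auto
  have "(g has_integral P (y - c) - P (x - c)) {x - c..y - c}"
    using assms by (intro P) auto
  from has_integral_shift_real_ivl[OF this, of "-c"]
  have shifted: "((\<lambda>s. g (s - c)) has_integral P (y - c) - P (x - c)) {x..y}"
    by simp
  have "(P y - P x) - (P (y - c) - P (x - c)) = integral {y-c..y} g - integral {x-c..x} g"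
    using assms integral_unique[OF P, of "y - c" y] integral_unique[OF P, of "x - c" x] by simp
  then show ?thesis
    using has_integral_diff[OF unshifted shifted] by simp
qed

lemma uniform_modulus_on_interval:
  fixes f :: "real \<Rightarrow> 'a::metric_space"
  assumes "continuous_on {a..b} f" "0 < \<epsilon>"
  obtains d where "0 < d" "\<And>x y. x \<in> {a..b} \<Longrightarrow> y \<in> {a..b} \<Longrightarrow> \<bar>x - y\<bar> \<le> d \<Longrightarrow> dist (f x) (f y) \<le> \<epsilon>"
proof -
  have "uniformly_continuous_on {a..b} f"
    using assms(1) by (rule compact_uniformly_continuous) simp
  with assms(2) obtain d where "0 < d" "\<forall>x\<in>{a..b}. \<forall>y\<in>{a..b}. dist y x < d \<longrightarrow> dist (f y) (f x) < \<epsilon>"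
    unfolding uniformly_continuous_on_def by metis
  then show ?thesis
    by (intro that[of "d / 2"]) (auto simp: dist_real_def abs_minus_commute intro!: less_imp_le)
qed

lemma bounded_on_interval:
  fixes f :: "real \<Rightarrow> 'a::real_normed_vector"
  assumes "continuous_on {a..b} f"
  obtains K where "0 \<le> K" "\<And>x. x \<in> {a..b} \<Longrightarrow> norm (f x) \<le> K"
proof -
  have "bounded (f ` {a..b})"
    using assms by (intro compact_imp_bounded compact_continuous_image) auto
  then obtain K where "\<And>x. x \<in> {a..b} \<Longrightarrow> norm (f x) \<le> K"
    unfolding bounded_iff by blast
  then show ?thesis using that[of "max K 0"] by fastforce
qed

lemma uniformly_continuous_on_dominated:
  fixes g :: "'a::metric_space \<Rightarrow> 'b::metric_space" and k :: "'a \<Rightarrow> 'c::metric_space"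
  assumes "uniformly_continuous_on T k" "\<And>x y. x \<in> S \<Longrightarrow> y \<in> S \<Longrightarrow> dist (g y) (g x) \<le> L * dist (k y) (k x)"
    and "S \<subseteq> T"
  shows "uniformly_continuous_on S g"
  unfolding uniformly_continuous_on_def
proof (intro allI impI)
  fix e :: real assume e: "0 < e"
  then obtain d where "d > 0" "\<forall>x\<in>T. \<forall>y\<in>T. dist y x < d \<longrightarrow> dist (k y) (k x) < e / (\<bar>L\<bar> + 1)"
    using assms(1) unfolding uniformly_continuous_on_def by (metis divide_pos_pos abs_ge_zero add_nonneg_pos zero_less_one)
  moreover have "L * r < e" if "0 \<le> r" "r < e / (\<bar>L\<bar> + 1)" for r
  proof -
    have "L * r \<le> \<bar>L\<bar> * r" using that(1) by (simp add: mult_right_mono)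
    also have "\<dots> \<le> \<bar>L\<bar> * (e / (\<bar>L\<bar> + 1))"
      using mult_left_mono[OF less_imp_le[OF that(2)] abs_ge_zero] .
    also have "\<dots> < e" using e by (simp add: field_simps)
    finally show ?thesis .
  qed
  ultimately show "\<exists>d>0. \<forall>x\<in>S. \<forall>y\<in>S. dist y x < d \<longrightarrow> dist (g y) (g x) < e"
    using assms(2,3) by (meson le_less_trans subsetD zero_le_dist)
qed

lemma continuous_on_compose_binary:
  fixes e :: "real \<Rightarrow> real \<Rightarrow> real" and f1 f2 :: "'a::topological_space \<Rightarrow> real"
  assumes "continuous_on UNIV (\<lambda>p. e (fst p) (snd p))" "continuous_on S f1" "continuous_on S f2"
  shows "continuous_on S (\<lambda>z. e (f1 z) (f2 z))"
  using continuous_on_compose2[OF assms(1) continuous_on_Pair[OF assms(2,3)]] by simp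

text \<open>Curves in the state space are only integrated against test vectors z: a type of sort
{real_inner, complete_space} is not an instance of banach, so vector-valued integrals of such
curves are unavailable.\<close>

lemma norm_le_from_weak_integral:
  fixes w :: "real \<Rightarrow> 'a::real_inner"
  assumes int: "\<And>z. ((\<lambda>\<sigma>. inner z (w \<sigma>)) has_integral inner z v) {s..t}" and "s \<le> t"
    and close: "\<And>\<sigma>. \<sigma> \<in> {s..t} \<Longrightarrow> norm (w \<sigma> - c) \<le> K"
  shows "norm (v - (t - s) *\<^sub>R c) \<le> K * (t - s)"
proof -
  define z where "z = v - (t - s) *\<^sub>R c"
  have K: "0 \<le> K" using close[of s] assms(2) by (auto intro: order_trans[OF norm_ge_zero])
  have zi: "((\<lambda>\<sigma>. inner z (w \<sigma> - c)) has_integral inner z z) {s..t}"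
    using has_integral_diff[OF int[of z] has_integral_const_real[of "inner z c" s t]] assms(2)
    by (simp add: z_def inner_diff_right)
  have zb: "norm (inner z (w \<sigma> - c)) \<le> norm z * K" if "\<sigma> \<in> {s..t}" for \<sigma>
    using Cauchy_Schwarz_ineq2[of z "w \<sigma> - c"] mult_left_mono[OF close[OF that] norm_ge_zero[of z]]
    by simp
  from has_integral_bound_real[OF _ finite.emptyI zi] zb K assms(2)
  have "norm (inner z z) \<le> norm z * K * (t - s)" by simp
  then have "norm z * norm z \<le> norm z * (K * (t - s))"
    by (simp add: power2_norm_eq_inner[symmetric] power2_eq_square algebra_simps)
  then show ?thesis
    using K assms(2) by (cases "norm z = 0") (auto simp: z_def mult_le_cancel_left)
qed

lemma abs_integral_inner_le:
  fixes h w :: "real \<Rightarrow> 'a::real_inner"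
  assumes "continuous_on {x..y} (\<lambda>s. inner (h s) (w s))" "x \<le> y"
    and "\<And>s. s \<in> {x..y} \<Longrightarrow> norm (h s) \<le> Hb" "\<And>s. s \<in> {x..y} \<Longrightarrow> norm (w s) \<le> Wb"
  shows "\<bar>integral {x..y} (\<lambda>s. inner (h s) (w s))\<bar> \<le> (y - x) * (Hb * Wb)"
proof -
  have "\<bar>inner (h s) (w s) - 0\<bar> \<le> Hb * Wb" if "s \<in> {x..y}" for s
    using Cauchy_Schwarz_ineq2[of "h s" "w s"]
      mult_mono[OF assms(3,4)[OF that] order_trans[OF norm_ge_zero assms(3)[OF that]] norm_ge_zero]
    by simp
  then show ?thesis
    using abs_integral_diff_le[OF assms(1) continuous_on_const assms(2), of 0] by simp
qed

lemma has_integral_inner_derivative: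
  fixes u w :: "real \<Rightarrow> 'a::real_inner"
  assumes "x \<le> y" "\<And>s. s \<in> {x..y} \<Longrightarrow> (u has_vector_derivative w s) (at s within {x..y})"
  shows "((\<lambda>s. inner z (w s)) has_integral inner z (u y - u x)) {x..y}"
proof -
  have "((\<lambda>s. inner z (w s)) has_integral inner z (u y) - inner z (u x)) {x..y}"
    by (rule fundamental_theorem_of_calculus[OF assms(1)])
       (use assms(2) in \<open>auto intro: bounded_linear.has_vector_derivative[OF bounded_linear_inner_right]\<close>)
  then show ?thesis by (simp add: inner_diff_right)
qed

section \<open>Steklov averaging and the energy identity\<close>

lemma window_integral_eq:
  fixes e :: "real \<Rightarrow> real \<Rightarrow> real"
  assumes ce: "continuous_on UNIV (\<lambda>p. e (fst p) (snd p))" and "0 \<le> \<delta>"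
  shows "integral {t-\<delta>..t} (\<lambda>\<rho>. e t \<rho> - e \<rho> (t-\<delta>)) =
    integral {0..\<delta>} (\<lambda>q. e t (t - q) - e (t - \<delta> + q) (t - \<delta>))"
proof -
  have c1: "continuous_on UNIV (e t)" and c2: "continuous_on UNIV (\<lambda>\<rho>. e \<rho> (t - \<delta>))"
    by (intro continuous_on_compose_binary[OF ce] continuous_intros)+
  have "((\<lambda>q. e t (t - q) - e (t - \<delta> + q) (t - \<delta>)) has_integral
      integral {t-\<delta>..t} (e t) - integral {t-\<delta>..t} (\<lambda>\<rho>. e \<rho> (t - \<delta>))) {0..\<delta>}"
    using assms(2)
    by (intro has_integral_diff has_integral_window_reflect[OF c1] has_integral_window_shift[OF c2])
  moreover have "integral {t-\<delta>..t} (\<lambda>\<rho>. e t \<rho> - e \<rho> (t-\<delta>))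
      = integral {t-\<delta>..t} (e t) - integral {t-\<delta>..t} (\<lambda>\<rho>. e \<rho> (t - \<delta>))"
    by (intro integral_diff integrable_continuous_interval continuous_on_subset[OF c1]
        continuous_on_subset[OF c2]) auto
  ultimately show ?thesis by (simp add: integral_unique)
qed

lemma continuous_on_window_integral:
  fixes e :: "real \<Rightarrow> real \<Rightarrow> real"
  assumes ce: "continuous_on UNIV (\<lambda>p. e (fst p) (snd p))" and "0 \<le> \<delta>"
  shows "continuous_on S (\<lambda>t. integral {t-\<delta>..t} (\<lambda>\<rho>. e t \<rho> - e \<rho> (t-\<delta>)))"
proof -
  have "continuous_on UNIV (\<lambda>p. e (fst p) (fst p - snd p) - e (fst p - \<delta> + snd p) (fst p - \<delta>))"
    by (intro continuous_on_diff continuous_on_compose_binary[OF ce] continuous_intros)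
  then have "continuous_on (S \<times> cbox 0 \<delta>) (\<lambda>(t, q). e t (t - q) - e (t - \<delta> + q) (t - \<delta>))"
    using continuous_on_subset[OF _ subset_UNIV] by (simp add: split_beta)
  from integral_continuous_on_param[OF this] show ?thesis
    by (simp add: window_integral_eq[OF assms])
qed

lemma double_window_integral:
  fixes e :: "real \<Rightarrow> real \<Rightarrow> real"
  assumes ce: "continuous_on UNIV (\<lambda>p. e (fst p) (snd p))" and "0 \<le> \<delta>"
  shows "integral {a..B} (\<lambda>t. integral {t-\<delta>..t} (\<lambda>\<rho>. e t \<rho> - e \<rho> (t-\<delta>))) =
    integral {0..\<delta>} (\<lambda>q. integral {a..B} (\<lambda>t. e t (t - q) - e (t - \<delta> + q) (t - \<delta>)))"
proof -
  have "continuous_on UNIV (\<lambda>p. e (fst p) (fst p - snd p) - e (fst p - \<delta> + snd p) (fst p - \<delta>))"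
    by (intro continuous_on_diff continuous_on_compose_binary[OF ce] continuous_intros)
  then have "continuous_on (cbox (a, 0) (B, \<delta>)) (\<lambda>(t, q). e t (t - q) - e (t - \<delta> + q) (t - \<delta>))"
    using continuous_on_subset[OF _ subset_UNIV] by (simp add: split_beta)
  from integral_swap_continuous[OF this] show ?thesis
    by (simp add: window_integral_eq[OF assms])
qed

text \<open>After swapping the two integrations, the integral over t of each slice telescopes to two
windows of length \<delta> - q at the ends a and B, on which e is nearly e a a resp. e B B;
integrating \<delta> - q over q gives \<delta>^2 / 2.\<close>

lemma steklov_diagonal_estimate:
  fixes e :: "real \<Rightarrow> real \<Rightarrow> real"
  assumes ce: "continuous_on UNIV (\<lambda>p. e (fst p) (snd p))" and \<delta>: "0 < \<delta>" "a + \<delta> \<le> B"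
    and close: "\<And>x1 x2 y1 y2. x1 \<in> {a..B} \<Longrightarrow> x2 \<in> {a..B} \<Longrightarrow> y1 \<in> {a..B} \<Longrightarrow> y2 \<in> {a..B} \<Longrightarrow>
      \<bar>x1 - y1\<bar> \<le> \<delta> \<Longrightarrow> \<bar>x2 - y2\<bar> \<le> \<delta> \<Longrightarrow> \<bar>e x1 x2 - e y1 y2\<bar> \<le> \<eta>"
  shows "\<bar>integral {a+\<delta>..B} (\<lambda>t. integral {t-\<delta>..t} (\<lambda>\<rho>. e t \<rho> - e \<rho> (t-\<delta>)))
          - \<delta>\<^sup>2 / 2 * (e B B - e a a)\<bar> \<le> 2 * \<eta> * \<delta>\<^sup>2"
proof -
  define kk where "kk x y q = integral {x..y} (\<lambda>s. e s (s - q))" for x y q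
  define M where "M q = integral {a+\<delta>..B} (\<lambda>t. e t (t - q) - e (t - \<delta> + q) (t - \<delta>))" for q
  have cg: "continuous_on S (\<lambda>s. e s (s - q))" for S q
    by (intro continuous_on_compose_binary[OF ce] continuous_intros)
  have \<eta>: "0 \<le> \<eta>" using close[of a a a a] \<delta> by auto
  have M_close: "\<bar>M q - (\<delta> - q) * (e B B - e a a)\<bar> \<le> 2 * \<eta> * \<delta>" if q: "q \<in> {0..\<delta>}" for q
  proof -
    have "M q = kk (B-\<delta>+q) B q - kk (a+q) (a+\<delta>) q"
      using has_integral_shift_difference[OF cg[of UNIV q] \<delta>(2), of "\<delta> - q"] q
      by (simp add: M_def kk_def integral_unique algebra_simps)
    moreover have "\<bar>kk (B-\<delta>+q) B q - (B - (B-\<delta>+q)) * e B B\<bar> \<le> (B - (B-\<delta>+q)) * \<eta>"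
      unfolding kk_def using q
      by (intro integral_close_to_const[OF cg] close) (use \<delta> in auto)
    moreover have "\<bar>kk (a+q) (a+\<delta>) q - (a+\<delta> - (a+q)) * e a a\<bar> \<le> (a+\<delta> - (a+q)) * \<eta>"
      unfolding kk_def using q
      by (intro integral_close_to_const[OF cg] close) (use \<delta> in auto)
    moreover have "(\<delta> - q) * \<eta> \<le> \<delta> * \<eta>" using q \<eta> by (simp add: mult_right_mono)
    ultimately show ?thesis by (simp add: algebra_simps abs_le_iff) linarith
  qed
  have cM: "continuous_on {0..\<delta>} M"
  proof -
    have c: "continuous_on UNIV (\<lambda>p. e (snd p) (snd p - fst p) - e (snd p - \<delta> + fst p) (snd p - \<delta>))"
      by (intro continuous_on_diff continuous_on_compose_binary[OF ce] continuous_intros)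
    have "continuous_on ({0..\<delta>} \<times> cbox (a+\<delta>) B) (\<lambda>(q, t). e t (t - q) - e (t - \<delta> + q) (t - \<delta>))"
      using continuous_on_subset[OF c subset_UNIV] by (simp add: split_beta)
    from integral_continuous_on_param[OF this] show ?thesis by (simp add: M_def)
  qed
  have "((\<lambda>q. (\<delta> - q) * (e B B - e a a)) has_integral \<delta>\<^sup>2 / 2 * (e B B - e a a)) {0..\<delta>}"
    using has_integral_mult_left[OF has_integral_triangle[of \<delta>]] \<delta> by simp
  moreover have "(M has_integral integral {0..\<delta>} M) {0..\<delta>}"
    using cM by (intro integrable_integral integrable_continuous_interval)
  ultimately have "((\<lambda>q. M q - (\<delta> - q) * (e B B - e a a)) has_integral
      integral {0..\<delta>} M - \<delta>\<^sup>2 / 2 * (e B B - e a a)) {0..\<delta>}"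
    by (intro has_integral_diff)
  from has_integral_bound_real[OF _ finite.emptyI this, of "2 * \<eta> * \<delta>"] \<delta> \<eta> M_close
  have "\<bar>integral {0..\<delta>} M - \<delta>\<^sup>2 / 2 * (e B B - e a a)\<bar> \<le> 2 * \<eta> * \<delta> * \<delta>"
    by simp
  then show ?thesis
    using double_window_integral[OF ce less_imp_le[OF \<delta>(1)], of "a+\<delta>" B]
    by (simp add: M_def[abs_def] power2_eq_square mult.assoc)
qed

lemma increment_estimate:
  fixes u w h :: "real \<Rightarrow> 'a::real_inner"
  assumes "s \<le> t"
    and der: "\<And>\<sigma>. \<sigma> \<in> {s..t} \<Longrightarrow> (u has_vector_derivative w \<sigma>) (at \<sigma> within {s..t})"
    and ch: "continuous_on {s..t} h"
    and w_close: "\<And>\<sigma>. \<sigma> \<in> {s..t} \<Longrightarrow> norm (w \<sigma> - w t) \<le> \<epsilon>"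
    and h_close: "\<And>\<sigma>. \<sigma> \<in> {s..t} \<Longrightarrow> norm (h \<sigma> - h t) \<le> \<epsilon>"
    and w_bound: "\<And>\<sigma>. \<sigma> \<in> {s..t} \<Longrightarrow> norm (w \<sigma>) \<le> Wb" and h_bound: "norm (h t) \<le> Hb"
  shows "\<bar>integral {s..t} (\<lambda>\<sigma>. inner (h \<sigma>) (u t - u s)) - (t - s)\<^sup>2 * inner (h t) (w t)\<bar>
           \<le> (t - s)\<^sup>2 * \<epsilon> * (Wb + Hb)"
proof -
  have u_int: "((\<lambda>\<sigma>. inner z (w \<sigma>)) has_integral inner z (u t - u s)) {s..t}" for z
    using has_integral_inner_derivative[OF assms(1) der] .
  have u_bound: "norm (u t - u s) \<le> Wb * (t - s)"
    using norm_le_from_weak_integral[OF u_int assms(1), of 0 Wb] w_bound by simp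
  have u_close: "norm (u t - u s - (t - s) *\<^sub>R w t) \<le> \<epsilon> * (t - s)"
    using norm_le_from_weak_integral[OF u_int assms(1) w_close] .
  have "\<bar>inner (h \<sigma>) (u t - u s) - inner (h t) ((t - s) *\<^sub>R w t)\<bar> \<le> \<epsilon> * (Wb * (t - s)) + Hb * (\<epsilon> * (t - s))"
    if "\<sigma> \<in> {s..t}" for \<sigma>
    by (rule abs_inner_diff_le[OF u_bound h_bound h_close[OF that] u_close])
  then have "\<bar>integral {s..t} (\<lambda>\<sigma>. inner (h \<sigma>) (u t - u s)) - integral {s..t} (\<lambda>\<sigma>. inner (h t) ((t - s) *\<^sub>R w t))\<bar>
      \<le> (t - s) * (\<epsilon> * (Wb * (t - s)) + Hb * (\<epsilon> * (t - s)))"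
    using ch assms(1) by (intro abs_integral_diff_le continuous_intros) auto
  then show ?thesis using assms(1) by (simp add: power2_eq_square algebra_simps)
qed

lemma steklov_forcing_estimate:
  fixes e :: "real \<Rightarrow> real \<Rightarrow> real" and u w h :: "real \<Rightarrow> 'a::real_inner"
  assumes ce: "continuous_on UNIV (\<lambda>p. e (fst p) (snd p))" and \<delta>: "0 < \<delta>" "a + \<delta> \<le> B"
    and increment: "\<And>x y. a \<le> x \<Longrightarrow> x \<le> y \<Longrightarrow> y \<le> B \<Longrightarrow>
      integral {x..y} (\<lambda>\<rho>. e y \<rho> - e \<rho> x) = integral {x..y} (\<lambda>\<sigma>. inner (h \<sigma>) (u y - u x))"
    and der: "\<And>s. s \<in> {a..B} \<Longrightarrow> (u has_vector_derivative w s) (at s within {a..B})"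
    and cw: "continuous_on {a..B} w" and ch: "continuous_on {a..B} h"
    and w_close: "\<And>x y. x \<in> {a..B} \<Longrightarrow> y \<in> {a..B} \<Longrightarrow> \<bar>x - y\<bar> \<le> \<delta> \<Longrightarrow> norm (w x - w y) \<le> \<epsilon>"
    and h_close: "\<And>x y. x \<in> {a..B} \<Longrightarrow> y \<in> {a..B} \<Longrightarrow> \<bar>x - y\<bar> \<le> \<delta> \<Longrightarrow> norm (h x - h y) \<le> \<epsilon>"
    and w_bound: "\<And>s. s \<in> {a..B} \<Longrightarrow> norm (w s) \<le> Wb"
    and h_bound: "\<And>s. s \<in> {a..B} \<Longrightarrow> norm (h s) \<le> Hb"
  shows "\<bar>integral {a+\<delta>..B} (\<lambda>t. integral {t-\<delta>..t} (\<lambda>\<rho>. e t \<rho> - e \<rho> (t-\<delta>)))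
          - \<delta>\<^sup>2 * integral {a+\<delta>..B} (\<lambda>s. inner (h s) (w s))\<bar> \<le> (B - a) * (\<delta>\<^sup>2 * \<epsilon> * (Wb + Hb))"
proof -
  have "\<bar>integral {t-\<delta>..t} (\<lambda>\<rho>. e t \<rho> - e \<rho> (t-\<delta>)) - \<delta>\<^sup>2 * inner (h t) (w t)\<bar> \<le> \<delta>\<^sup>2 * \<epsilon> * (Wb + Hb)"
    if t: "t \<in> {a+\<delta>..B}" for t
  proof -
    have sub: "{t-\<delta>..t} \<subseteq> {a..B}" using t by auto
    have "\<bar>integral {t-\<delta>..t} (\<lambda>\<sigma>. inner (h \<sigma>) (u t - u (t-\<delta>))) - (t - (t-\<delta>))\<^sup>2 * inner (h t) (w t)\<bar>
        \<le> (t - (t-\<delta>))\<^sup>2 * \<epsilon> * (Wb + Hb)"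
      using t sub \<delta>
      by (intro increment_estimate continuous_on_subset[OF ch] w_close h_close w_bound h_bound
          has_vector_derivative_within_subset[OF der]) auto
    then show ?thesis using increment[of "t-\<delta>" t] t \<delta> by simp
  qed
  moreover have "continuous_on {a+\<delta>..B} (\<lambda>t. \<delta>\<^sup>2 * inner (h t) (w t))"
    using \<delta> by (intro continuous_intros continuous_on_subset[OF cw] continuous_on_subset[OF ch]) auto
  ultimately have "\<bar>integral {a+\<delta>..B} (\<lambda>t. integral {t-\<delta>..t} (\<lambda>\<rho>. e t \<rho> - e \<rho> (t-\<delta>)))
      - integral {a+\<delta>..B} (\<lambda>t. \<delta>\<^sup>2 * inner (h t) (w t))\<bar> \<le> (B - (a + \<delta>)) * (\<delta>\<^sup>2 * \<epsilon> * (Wb + Hb))"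
    using \<delta> by (intro abs_integral_diff_le continuous_on_window_integral[OF ce]) auto
  moreover have "(B - (a + \<delta>)) * (\<delta>\<^sup>2 * \<epsilon> * (Wb + Hb)) \<le> (B - a) * (\<delta>\<^sup>2 * \<epsilon> * (Wb + Hb))"
  proof -
    have "0 \<le> \<delta>\<^sup>2 * \<epsilon> * (Wb + Hb)"
      using w_close[of a a] order_trans[OF norm_ge_zero h_bound[of a]] order_trans[OF norm_ge_zero w_bound[of a]] \<delta>
      by auto
    then show ?thesis using \<delta> by (intro mult_right_mono) auto
  qed
  ultimately show ?thesis by simp
qed

definition energy_form :: "(real \<Rightarrow> 'a::real_inner) \<Rightarrow> (real \<Rightarrow> 'a) \<Rightarrow> real \<Rightarrow> real \<Rightarrow> real" where
  "energy_form w v \<sigma> \<rho> = inner (w \<sigma>) (w \<rho>) + inner (v \<sigma>) (v \<rho>)"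

lemma energy_form_diag: "energy_form w v s s = (norm (w s))\<^sup>2 + (norm (v s))\<^sup>2"
  by (simp add: energy_form_def power2_norm_eq_inner)

lemma continuous_on_energy_form:
  assumes "continuous_on UNIV w" "continuous_on UNIV v"
  shows "continuous_on UNIV (\<lambda>p. energy_form w v (fst p) (snd p))"
  unfolding energy_form_def
  by (intro continuous_intros continuous_on_compose2[OF assms(1)] continuous_on_compose2[OF assms(2)]) auto

lemma energy_form_close:
  assumes "norm (w x2) \<le> Wb" "norm (w y1) \<le> Wb" "norm (v x2) \<le> Vb" "norm (v y1) \<le> Vb"
    and "norm (w x1 - w y1) \<le> \<epsilon>" "norm (w x2 - w y2) \<le> \<epsilon>"
    and "norm (v x1 - v y1) \<le> \<epsilon>" "norm (v x2 - v y2) \<le> \<epsilon>"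
  shows "\<bar>energy_form w v x1 x2 - energy_form w v y1 y2\<bar> \<le> 2 * (Wb + Vb) * \<epsilon>"
proof -
  have "\<bar>inner (w x1) (w x2) - inner (w y1) (w y2)\<bar> \<le> \<epsilon> * Wb + Wb * \<epsilon>"
    using assms by (intro abs_inner_diff_le)
  moreover have "\<bar>inner (v x1) (v x2) - inner (v y1) (v y2)\<bar> \<le> \<epsilon> * Vb + Vb * \<epsilon>"
    using assms by (intro abs_inner_diff_le)
  ultimately show ?thesis by (simp add: energy_form_def algebra_simps)
qed

lemma energy_form_increment:
  fixes u w h v :: "real \<Rightarrow> 'a::real_inner"
  assumes "x \<le> y" and der: "\<And>s. s \<in> {x..y} \<Longrightarrow> (u has_vector_derivative w s) (at s within {x..y})"
    and ch: "continuous_on {x..y} h"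
    and weak: "((\<lambda>\<sigma>. inner (h \<sigma>) (u y - u x) - inner (v \<sigma>) (v y - v x))
                 has_integral inner (w y - w x) (u y - u x)) {x..y}"
  shows "integral {x..y} (\<lambda>\<rho>. energy_form w v y \<rho> - energy_form w v \<rho> x)
           = integral {x..y} (\<lambda>\<sigma>. inner (h \<sigma>) (u y - u x))"
proof -
  have "((\<lambda>\<sigma>. inner (h \<sigma>) (u y - u x)) has_integral integral {x..y} (\<lambda>\<sigma>. inner (h \<sigma>) (u y - u x))) {x..y}"
    using ch by (intro integrable_integral integrable_continuous_interval continuous_intros)
  from has_integral_diff[OF this weak]
  have "((\<lambda>\<rho>. inner (v y - v x) (v \<rho>)) has_integral
      integral {x..y} (\<lambda>\<sigma>. inner (h \<sigma>) (u y - u x)) - inner (w y - w x) (u y - u x)) {x..y}"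
    by (simp add: inner_commute)
  from has_integral_add[OF has_integral_inner_derivative[OF assms(1) der, where z = "w y - w x"] this]
  have "((\<lambda>\<rho>. energy_form w v y \<rho> - energy_form w v \<rho> x) has_integral
      integral {x..y} (\<lambda>\<sigma>. inner (h \<sigma>) (u y - u x))) {x..y}"
    by (simp add: energy_form_def inner_diff_left inner_commute[of _ "w x"] inner_commute[of _ "v x"] algebra_simps)
  then show ?thesis by (rule integral_unique)
qed

lemma abs_diff_le_of_scaled_approx:
  fixes Q X Y \<delta> \<alpha> \<beta> :: real
  assumes "0 < \<delta>" "\<bar>Q - \<delta>\<^sup>2 * X\<bar> \<le> \<delta>\<^sup>2 * \<alpha>" "\<bar>Q - \<delta>\<^sup>2 * Y\<bar> \<le> \<delta>\<^sup>2 * \<beta>"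
  shows "\<bar>X - Y\<bar> \<le> \<alpha> + \<beta>"
proof -
  have "(Q - \<delta>\<^sup>2 * Y) - (Q - \<delta>\<^sup>2 * X) = \<delta>\<^sup>2 * (X - Y)"
    by (simp add: algebra_simps)
  then have "\<delta>\<^sup>2 * \<bar>X - Y\<bar> = \<bar>(Q - \<delta>\<^sup>2 * Y) - (Q - \<delta>\<^sup>2 * X)\<bar>"
    by (simp add: abs_mult)
  also have "\<dots> \<le> \<delta>\<^sup>2 * (\<alpha> + \<beta>)"
    using assms(2,3) by (simp add: distrib_left)
  finally show ?thesis using assms(1) by simp
qed

lemma steklov_energy_estimate:
  fixes e :: "real \<Rightarrow> real \<Rightarrow> real" and u w h :: "real \<Rightarrow> 'a::real_inner"
  assumes ce: "continuous_on UNIV (\<lambda>p. e (fst p) (snd p))" and \<delta>: "0 < \<delta>" "a + \<delta> \<le> B"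
    and e_close: "\<And>x1 x2 y1 y2. x1 \<in> {a..B} \<Longrightarrow> x2 \<in> {a..B} \<Longrightarrow> y1 \<in> {a..B} \<Longrightarrow> y2 \<in> {a..B} \<Longrightarrow>
      \<bar>x1 - y1\<bar> \<le> \<delta> \<Longrightarrow> \<bar>x2 - y2\<bar> \<le> \<delta> \<Longrightarrow> \<bar>e x1 x2 - e y1 y2\<bar> \<le> \<eta>"
    and increment: "\<And>x y. a \<le> x \<Longrightarrow> x \<le> y \<Longrightarrow> y \<le> B \<Longrightarrow>
      integral {x..y} (\<lambda>\<rho>. e y \<rho> - e \<rho> x) = integral {x..y} (\<lambda>\<sigma>. inner (h \<sigma>) (u y - u x))"
    and der: "\<And>s. s \<in> {a..B} \<Longrightarrow> (u has_vector_derivative w s) (at s within {a..B})"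
    and cw: "continuous_on {a..B} w" and ch: "continuous_on {a..B} h"
    and w_close: "\<And>x y. x \<in> {a..B} \<Longrightarrow> y \<in> {a..B} \<Longrightarrow> \<bar>x - y\<bar> \<le> \<delta> \<Longrightarrow> norm (w x - w y) \<le> \<epsilon>"
    and h_close: "\<And>x y. x \<in> {a..B} \<Longrightarrow> y \<in> {a..B} \<Longrightarrow> \<bar>x - y\<bar> \<le> \<delta> \<Longrightarrow> norm (h x - h y) \<le> \<epsilon>"
    and w_bound: "\<And>s. s \<in> {a..B} \<Longrightarrow> norm (w s) \<le> Wb"
    and h_bound: "\<And>s. s \<in> {a..B} \<Longrightarrow> norm (h s) \<le> Hb"
  shows "\<bar>(e B B - e a a) / 2 - integral {a..B} (\<lambda>s. inner (h s) (w s))\<bar>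
           \<le> 2 * \<eta> + (B - a) * \<epsilon> * (Wb + Hb) + \<delta> * (Hb * Wb)"
proof -
  have chw: "continuous_on S (\<lambda>s. inner (h s) (w s))" if "S \<subseteq> {a..B}" for S
    using cw ch that by (auto intro!: continuous_intros intro: continuous_on_subset)
  have "\<bar>(e B B - e a a) / 2 - integral {a+\<delta>..B} (\<lambda>s. inner (h s) (w s))\<bar>
      \<le> 2 * \<eta> + (B - a) * \<epsilon> * (Wb + Hb)"
  proof (rule abs_diff_le_of_scaled_approx[OF \<delta>(1)])
    show "\<bar>integral {a+\<delta>..B} (\<lambda>t. integral {t-\<delta>..t} (\<lambda>\<rho>. e t \<rho> - e \<rho> (t-\<delta>))) - \<delta>\<^sup>2 * ((e B B - e a a) / 2)\<bar>
        \<le> \<delta>\<^sup>2 * (2 * \<eta>)"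
      using steklov_diagonal_estimate[OF ce \<delta> e_close] by (simp add: algebra_simps)
    show "\<bar>integral {a+\<delta>..B} (\<lambda>t. integral {t-\<delta>..t} (\<lambda>\<rho>. e t \<rho> - e \<rho> (t-\<delta>)))
        - \<delta>\<^sup>2 * integral {a+\<delta>..B} (\<lambda>s. inner (h s) (w s))\<bar> \<le> \<delta>\<^sup>2 * ((B - a) * \<epsilon> * (Wb + Hb))"
      using steklov_forcing_estimate[OF ce \<delta> increment der cw ch w_close h_close w_bound h_bound]
      by (simp add: algebra_simps)
  qed
  moreover have "integral {a..B} (\<lambda>s. inner (h s) (w s))
      = integral {a..a+\<delta>} (\<lambda>s. inner (h s) (w s)) + integral {a+\<delta>..B} (\<lambda>s. inner (h s) (w s))"
    using \<delta> by (intro Henstock_Kurzweil_Integration.integral_combine[symmetric] integrable_continuous_interval chw) auto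
  moreover have "\<bar>integral {a..a+\<delta>} (\<lambda>s. inner (h s) (w s))\<bar> \<le> (a + \<delta> - a) * (Hb * Wb)"
    using \<delta> h_bound w_bound by (intro abs_integral_inner_le chw) auto
  ultimately show ?thesis by simp
qed

lemma common_modulus_on_interval:
  fixes w v h :: "real \<Rightarrow> 'a::real_normed_vector"
  assumes "continuous_on {a..B} w" "continuous_on {a..B} v" "continuous_on {a..B} h" "0 < \<epsilon>" "a < B"
  obtains \<delta> where "0 < \<delta>" "\<delta> \<le> \<epsilon>" "a + \<delta> \<le> B"
    "\<And>x y. x \<in> {a..B} \<Longrightarrow> y \<in> {a..B} \<Longrightarrow> \<bar>x - y\<bar> \<le> \<delta> \<Longrightarrow>
       norm (w x - w y) \<le> \<epsilon> \<and> norm (v x - v y) \<le> \<epsilon> \<and> norm (h x - h y) \<le> \<epsilon>"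
proof -
  have "continuous_on {a..B} (\<lambda>s. (w s, v s, h s))"
    using assms by (intro continuous_intros)
  from uniform_modulus_on_interval[OF this assms(4)] obtain d where d: "0 < d"
    "\<And>x y. x \<in> {a..B} \<Longrightarrow> y \<in> {a..B} \<Longrightarrow> \<bar>x - y\<bar> \<le> d \<Longrightarrow> dist (w x, v x, h x) (w y, v y, h y) \<le> \<epsilon>"
    by blast
  have "norm (w x - w y) \<le> \<epsilon> \<and> norm (v x - v y) \<le> \<epsilon> \<and> norm (h x - h y) \<le> \<epsilon>"
    if "x \<in> {a..B}" "y \<in> {a..B}" "\<bar>x - y\<bar> \<le> min d (min \<epsilon> (B - a))" for x y
    using d(2)[OF that(1,2)] that(3) dist_fst_le[of "(w x, v x, h x)" "(w y, v y, h y)"]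
      dist_snd_le[of "(w x, v x, h x)" "(w y, v y, h y)"]
      dist_fst_le[of "(v x, h x)" "(v y, h y)"] dist_snd_le[of "(v x, h x)" "(v y, h y)"]
    by (auto simp: dist_norm)
  then show ?thesis
    using d(1) assms(4,5) by (intro that[of "min d (min \<epsilon> (B - a))"]) auto
qed

lemma energy_identity_continuous:
  fixes u w h v :: "real \<Rightarrow> 'a::real_inner"
  assumes "a < B"
    and der: "\<And>s. s \<in> {a..B} \<Longrightarrow> (u has_vector_derivative w s) (at s within {a..B})"
    and cw: "continuous_on UNIV w" and cv: "continuous_on UNIV v" and ch: "continuous_on UNIV h"
    and weak: "\<And>x y. a \<le> x \<Longrightarrow> x \<le> y \<Longrightarrow> y \<le> B \<Longrightarrow>
      ((\<lambda>\<sigma>. inner (h \<sigma>) (u y - u x) - inner (v \<sigma>) (v y - v x))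
        has_integral inner (w y - w x) (u y - u x)) {x..y}"
  shows "((\<lambda>s. inner (h s) (w s)) has_integral
           ((norm (w B))\<^sup>2 + (norm (v B))\<^sup>2 - (norm (w a))\<^sup>2 - (norm (v a))\<^sup>2) / 2) {a..B}"
proof -
  define e where "e = energy_form w v"
  define I where "I = integral {a..B} (\<lambda>s. inner (h s) (w s))"
  have cw': "continuous_on {a..B} w" and cv': "continuous_on {a..B} v" and ch': "continuous_on {a..B} h"
    using cw cv ch by (auto intro: continuous_on_subset)
  have ce: "continuous_on UNIV (\<lambda>p. e (fst p) (snd p))"
    unfolding e_def by (rule continuous_on_energy_form[OF cw cv])
  have increment: "integral {x..y} (\<lambda>\<rho>. e y \<rho> - e \<rho> x) = integral {x..y} (\<lambda>\<sigma>. inner (h \<sigma>) (u y - u x))"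
    if "a \<le> x" "x \<le> y" "y \<le> B" for x y
    unfolding e_def using that
    by (intro energy_form_increment weak has_vector_derivative_within_subset[OF der]
        continuous_on_subset[OF ch]) auto
  obtain Wb where Wb: "\<And>s. s \<in> {a..B} \<Longrightarrow> norm (w s) \<le> Wb" "0 \<le> Wb"
    using bounded_on_interval[OF cw'] by metis
  obtain Vb where Vb: "\<And>s. s \<in> {a..B} \<Longrightarrow> norm (v s) \<le> Vb" "0 \<le> Vb"
    using bounded_on_interval[OF cv'] by metis
  obtain Hb where Hb: "\<And>s. s \<in> {a..B} \<Longrightarrow> norm (h s) \<le> Hb" "0 \<le> Hb"
    using bounded_on_interval[OF ch'] by metis
  have "\<bar>(e B B - e a a) / 2 - I\<bar> \<le> (4 * (Wb + Vb) + (B - a) * (Wb + Hb) + Hb * Wb) * \<epsilon>"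
    if \<epsilon>: "\<epsilon> > 0" for \<epsilon>
  proof -
    obtain \<delta> where \<delta>: "0 < \<delta>" "\<delta> \<le> \<epsilon>" "a + \<delta> \<le> B" and close:
      "\<And>x y. x \<in> {a..B} \<Longrightarrow> y \<in> {a..B} \<Longrightarrow> \<bar>x - y\<bar> \<le> \<delta> \<Longrightarrow>
         norm (w x - w y) \<le> \<epsilon> \<and> norm (v x - v y) \<le> \<epsilon> \<and> norm (h x - h y) \<le> \<epsilon>"
      using common_modulus_on_interval[OF cw' cv' ch' \<epsilon> \<open>a < B\<close>] by blast
    have e_close: "\<bar>e x1 x2 - e y1 y2\<bar> \<le> 2 * (Wb + Vb) * \<epsilon>"
      if "x1 \<in> {a..B}" "x2 \<in> {a..B}" "y1 \<in> {a..B}" "y2 \<in> {a..B}" "\<bar>x1 - y1\<bar> \<le> \<delta>" "\<bar>x2 - y2\<bar> \<le> \<delta>"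
      for x1 x2 y1 y2
      unfolding e_def using that close Wb Vb by (intro energy_form_close) auto
    have "\<bar>(e B B - e a a) / 2 - I\<bar> \<le> 2 * (2 * (Wb + Vb) * \<epsilon>) + (B - a) * \<epsilon> * (Wb + Hb) + \<delta> * (Hb * Wb)"
      unfolding I_def using close
      by (intro steklov_energy_estimate[OF ce \<delta>(1,3) e_close increment der cw' ch' _ _ Wb(1) Hb(1)]) auto
    moreover have "\<delta> * (Hb * Wb) \<le> \<epsilon> * (Hb * Wb)"
      using \<delta>(2) Hb(2) Wb(2) by (simp add: mult_right_mono)
    ultimately show ?thesis by (simp add: algebra_simps)
  qed
  then have "(e B B - e a a) / 2 - I = 0"
    by (rule zero_if_abs_le_mult_epsilon)
  moreover have "((\<lambda>s. inner (h s) (w s)) has_integral I) {a..B}"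
    unfolding I_def using cw' ch' by (intro integrable_integral integrable_continuous_interval continuous_intros)
  ultimately show ?thesis by (simp add: e_def energy_form_diag algebra_simps)
qed

text \<open>Composing with clamp a B extends the data continuously to the whole line, as the window
integrals require.\<close>

lemma energy_identity_on_interval:
  fixes u w h Ru :: "real \<Rightarrow> 'a::real_inner"
  assumes "a < B"
    and der: "\<And>s. s \<in> {a..B} \<Longrightarrow> (u has_vector_derivative w s) (at s within {a..B})"
    and cw: "continuous_on {a..B} w" and cR: "continuous_on {a..B} Ru" and ch: "continuous_on {a..B} h"
    and weak: "\<And>x y. a \<le> x \<Longrightarrow> x \<le> y \<Longrightarrow> y \<le> B \<Longrightarrow>
      ((\<lambda>\<sigma>. inner (h \<sigma>) (u y - u x) - inner (Ru \<sigma>) (Ru y - Ru x))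
        has_integral inner (w y - w x) (u y - u x)) {x..y}"
  shows "((\<lambda>s. inner (h s) (w s)) has_integral
           ((norm (w B))\<^sup>2 + (norm (Ru B))\<^sup>2 - (norm (w a))\<^sup>2 - (norm (Ru a))\<^sup>2) / 2) {a..B}"
proof -
  define ext where "ext f s = f (clamp a B s)" for f :: "real \<Rightarrow> 'a" and s
  have ext_eq: "ext f s = f s" if "s \<in> {a..B}" for f s
    using that by (simp add: ext_def)
  have ext_cont: "continuous_on UNIV (ext f)" if "continuous_on {a..B} f" for f
    using that unfolding ext_def by (intro clamp_continuous_on) simp
  have "((\<lambda>s. inner (ext h s) (ext w s)) has_integral
      ((norm (ext w B))\<^sup>2 + (norm (ext Ru B))\<^sup>2 - (norm (ext w a))\<^sup>2 - (norm (ext Ru a))\<^sup>2) / 2) {a..B}"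
  proof (rule energy_identity_continuous[OF \<open>a < B\<close> _ ext_cont[OF cw] ext_cont[OF cR] ext_cont[OF ch]])
    show "(u has_vector_derivative ext w s) (at s within {a..B})" if "s \<in> {a..B}" for s
      using der[OF that] ext_eq[OF that] by simp
    fix x y assume xy: "a \<le> x" "x \<le> y" "y \<le> B"
    have "ext f \<sigma> = f \<sigma>" if "\<sigma> \<in> {x..y}" for f \<sigma> using that xy by (intro ext_eq) auto
    then show "((\<lambda>\<sigma>. inner (ext h \<sigma>) (u y - u x) - inner (ext Ru \<sigma>) (ext Ru y - ext Ru x))
        has_integral inner (ext w y - ext w x) (u y - u x)) {x..y}"
      using weak[OF xy] xy by (subst has_integral_cong) auto
  qed
  then show ?thesis
    using \<open>a < B\<close> by (subst has_integral_cong[where g = "\<lambda>s. inner (ext h s) (ext w s)"]) (auto simp: ext_eq)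
qed

section \<open>A chain rule for the potential\<close>

lemma lin_op_on_subspace: "lin_op_on D T \<Longrightarrow> subspace D"
  by (simp add: lin_op_on_def)

lemma lin_op_on_combination:
  "lin_op_on D T \<Longrightarrow> x \<in> D \<Longrightarrow> y \<in> D \<Longrightarrow> T (x + c *\<^sub>R y) = T x + c *\<^sub>R T y"
  by (simp add: lin_op_on_def)

lemma lin_op_on_add: "lin_op_on D T \<Longrightarrow> x \<in> D \<Longrightarrow> y \<in> D \<Longrightarrow> T (x + y) = T x + T y"
  using lin_op_on_combination[of D T x y 1] by simp

lemma lin_op_on_diff: "lin_op_on D T \<Longrightarrow> x \<in> D \<Longrightarrow> y \<in> D \<Longrightarrow> T (x - y) = T x - T y"
  using lin_op_on_combination[of D T x y "-1"] by simp

lemma lin_op_on_scaleR: "lin_op_on D T \<Longrightarrow> x \<in> D \<Longrightarrow> T (c *\<^sub>R x) = c *\<^sub>R T x"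
  using lin_op_on_combination[of D T 0 x c] lin_op_on_combination[of D T 0 0 1]
  by (simp add: lin_op_on_subspace subspace_0)

lemma has_vector_derivative_within_eps:
  "(f has_vector_derivative w) (at x within S) \<longleftrightarrow>
    (\<forall>e>0. \<exists>d>0. \<forall>y\<in>S. \<bar>y - x\<bar> < d \<longrightarrow> norm (f y - f x - (y - x) *\<^sub>R w) \<le> e * \<bar>y - x\<bar>)"
  unfolding has_vector_derivative_def has_derivative_within_alt
  by (simp add: bounded_linear_scaleR_left)

lemma frechet_line_derivative:
  fixes F :: "'a::real_inner \<Rightarrow> real" and f R :: "'a \<Rightarrow> 'a"
  assumes R: "lin_op_on DR R"
    and Fd: "\<forall>x\<in>DR. \<forall>\<epsilon>>0. \<exists>\<delta>>0. \<forall>v\<in>DR. norm (R v) < \<delta> \<longrightarrow>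
               \<bar>F (x + v) - F x - inner (f x) v\<bar> \<le> \<epsilon> * norm (R v)"
    and x: "x \<in> DR" and v: "v \<in> DR"
  shows "((\<lambda>\<theta>. F (x + \<theta> *\<^sub>R v)) has_real_derivative inner (f (x + \<theta> *\<^sub>R v)) v) (at \<theta>)"
proof -
  define y where "y = x + \<theta> *\<^sub>R v"
  have sub: "subspace DR" using R by (rule lin_op_on_subspace)
  have y: "y \<in> DR" using sub x v by (simp add: y_def subspace_add subspace_scale)
  have "\<exists>d>0. \<forall>\<theta>'. \<bar>\<theta>' - \<theta>\<bar> < d \<longrightarrow>
      \<bar>F (x + \<theta>' *\<^sub>R v) - F y - (\<theta>' - \<theta>) * inner (f y) v\<bar> \<le> e * \<bar>\<theta>' - \<theta>\<bar>" if e: "e > 0" for e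
  proof -
    define c where "c = norm (R v) + 1"
    have c: "c > 0" "norm (R v) \<le> c" by (simp_all add: c_def add_nonneg_pos)
    have "e / c > 0" using e c by simp
    with Fd y obtain d where d: "d > 0" "\<forall>v'\<in>DR. norm (R v') < d \<longrightarrow>
        \<bar>F (y + v') - F y - inner (f y) v'\<bar> \<le> e / c * norm (R v')"
      by blast
    show ?thesis
    proof (intro exI[of _ "d / c"] conjI allI impI)
      show "d / c > 0" using d c by simp
      fix \<theta>' assume \<theta>': "\<bar>\<theta>' - \<theta>\<bar> < d / c"
      define v' where "v' = (\<theta>' - \<theta>) *\<^sub>R v"
      have v'D: "v' \<in> DR" using sub v by (simp add: v'_def subspace_scale)
      have Rv': "norm (R v') = \<bar>\<theta>' - \<theta>\<bar> * norm (R v)"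
        by (simp add: v'_def lin_op_on_scaleR[OF R v])
      have "norm (R v') \<le> \<bar>\<theta>' - \<theta>\<bar> * c" unfolding Rv' using c by (simp add: mult_left_mono)
      also have "\<dots> < d" using \<theta>' c by (simp add: pos_less_divide_eq)
      finally have "\<bar>F (y + v') - F y - inner (f y) v'\<bar> \<le> e / c * (\<bar>\<theta>' - \<theta>\<bar> * norm (R v))"
        using d(2) v'D by (simp only: Rv'[symmetric])
      also have "\<dots> \<le> e / c * (\<bar>\<theta>' - \<theta>\<bar> * c)"
        using e c by (intro mult_left_mono) (auto intro: mult_left_mono)
      also have "\<dots> = e * \<bar>\<theta>' - \<theta>\<bar>" using c by simp
      finally show "\<bar>F (x + \<theta>' *\<^sub>R v) - F y - (\<theta>' - \<theta>) * inner (f y) v\<bar> \<le> e * \<bar>\<theta>' - \<theta>\<bar>"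
        by (simp add: v'_def y_def algebra_simps)
    qed
  qed
  then show ?thesis
    unfolding has_real_derivative_iff_has_vector_derivative has_vector_derivative_within_eps
    by (simp add: y_def)
qed

lemma frechet_taylor_remainder:
  fixes F :: "'a::real_inner \<Rightarrow> real" and f R :: "'a \<Rightarrow> 'a"
  assumes R: "lin_op_on DR R"
    and Fd: "\<forall>x\<in>DR. \<forall>\<epsilon>>0. \<exists>\<delta>>0. \<forall>v\<in>DR. norm (R v) < \<delta> \<longrightarrow>
               \<bar>F (x + v) - F x - inner (f x) v\<bar> \<le> \<epsilon> * norm (R v)"
    and lip: "\<And>x y. x \<in> DR \<Longrightarrow> y \<in> DR \<Longrightarrow> norm (R x) \<le> K \<Longrightarrow> norm (R y) \<le> K \<Longrightarrow>
               norm (f x - f y) \<le> L * norm (R (x - y))"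
    and L: "0 \<le> L" and x: "x \<in> DR" and v: "v \<in> DR"
    and K: "norm (R x) \<le> K" "norm (R (x + v)) \<le> K"
  shows "\<bar>F (x + v) - F x - inner (f x) v\<bar> \<le> L * norm (R v) * norm v"
proof -
  have sub: "subspace DR" using R by (rule lin_op_on_subspace)
  have seg: "x + \<theta> *\<^sub>R v \<in> DR" for \<theta> using sub x v by (simp add: subspace_add subspace_scale)
  note der = frechet_line_derivative[OF R Fd x v]
  have "continuous_on {0..1} (\<lambda>\<theta>. F (x + \<theta> *\<^sub>R v))"
    using der by (meson DERIV_isCont continuous_at_imp_continuous_on)
  then obtain z where z: "0 < z" "z < 1" "F (x + v) - F x = inner (f (x + z *\<^sub>R v)) v"
    using MVT2[of 0 1 "\<lambda>\<theta>. F (x + \<theta> *\<^sub>R v)"] der by force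
  have Rz: "R (x + z *\<^sub>R v) = (1 - z) *\<^sub>R R x + z *\<^sub>R R (x + v)"
    using lin_op_on_combination[OF R x v] lin_op_on_add[OF R x v] by (simp add: algebra_simps)
  have "norm (R (x + z *\<^sub>R v)) \<le> (1 - z) * K + z * K"
    unfolding Rz using z K
    by (intro order_trans[OF norm_triangle_ineq] add_mono) (auto intro: mult_left_mono)
  then have "norm (f (x + z *\<^sub>R v) - f x) \<le> L * norm (R (x + z *\<^sub>R v - x))"
    using K by (intro lip seg x) (auto simp: algebra_simps)
  also have "\<dots> \<le> L * norm (R v)"
    using z L by (simp add: lin_op_on_scaleR[OF R v] mult_left_le_one_le mult_left_mono)
  finally have "\<bar>inner (f (x + z *\<^sub>R v) - f x) v\<bar> \<le> L * norm (R v) * norm v"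
    by (metis Cauchy_Schwarz_ineq2 mult_right_mono norm_ge_zero order_trans)
  then show ?thesis using z(3) by (simp add: inner_diff_left)
qed

text \<open>u is differentiable only in the weaker norm, while the Taylor remainder of F is controlled by
the increment of Ru; continuity of Ru is what makes that remainder o(|t - s|).\<close>

lemma has_vector_derivative_comp_taylor:
  fixes F :: "'a::real_inner \<Rightarrow> real" and u Ru :: "real \<Rightarrow> 'a" and g :: 'a
  assumes taylor: "\<And>t. t \<in> S \<Longrightarrow>
      \<bar>F (u t) - F (u s) - inner g (u t - u s)\<bar> \<le> L * norm (Ru t - Ru s) * norm (u t - u s)"
    and cR: "continuous (at s within S) Ru"
    and der: "(u has_vector_derivative w) (at s within S)"
  shows "((\<lambda>t. F (u t)) has_vector_derivative inner g w) (at s within S)"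
proof -
  define q where "q t = (1 / norm (t - s)) *\<^sub>R (u t - (u s + (t - s) *\<^sub>R w))" for t
  have q: "(q \<longlongrightarrow> 0) (at s within S)"
    using der unfolding q_def has_vector_derivative_def has_derivative_within by simp
  have dR: "((\<lambda>t. norm (Ru t - Ru s)) \<longlongrightarrow> 0) (at s within S)"
    using tendsto_norm[OF tendsto_diff[OF cR[unfolded continuous_within] tendsto_const[of "Ru s"]]] by simp
  define bound where "bound t = \<bar>L\<bar> * norm (Ru t - Ru s) * (norm (q t) + norm w) + norm g * norm (q t)" for t
  have "((\<lambda>t. (1 / norm (t - s)) *\<^sub>R (F (u t) - (F (u s) + (t - s) * inner g w))) \<longlongrightarrow> 0) (at s within S)"
  proof (rule Lim_null_comparison)
    show "(bound \<longlongrightarrow> 0) (at s within S)"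
      using tendsto_add[OF tendsto_mult[OF tendsto_mult[OF tendsto_const[of "\<bar>L\<bar>"] dR]
          tendsto_add[OF tendsto_norm[OF q] tendsto_const[of "norm w"]]]
          tendsto_mult[OF tendsto_const[of "norm g"] tendsto_norm[OF q]]]
      by (simp add: bound_def[abs_def])
    show "\<forall>\<^sub>F t in at s within S. norm ((1 / norm (t - s)) *\<^sub>R (F (u t) - (F (u s) + (t - s) * inner g w))) \<le> bound t"
      unfolding eventually_at_filter
    proof (intro always_eventually allI impI)
      fix t assume t: "t \<noteq> s" "t \<in> S"
      have du: "u t - u s = \<bar>t - s\<bar> *\<^sub>R q t + (t - s) *\<^sub>R w"
        using t by (simp add: q_def)
      have "norm (u t - u s) \<le> \<bar>t - s\<bar> * (norm (q t) + norm w)"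
        unfolding du by (rule order_trans[OF norm_triangle_ineq]) (simp add: distrib_left)
      then have "\<bar>F (u t) - F (u s) - inner g (u t - u s)\<bar> \<le> \<bar>L\<bar> * norm (Ru t - Ru s) * (\<bar>t - s\<bar> * (norm (q t) + norm w))"
        using taylor[OF t(2)] by (smt (verit) abs_ge_self mult_left_mono mult_right_mono norm_ge_zero zero_le_mult_iff)
      moreover have "\<bar>inner g (u t - u s - (t - s) *\<^sub>R w)\<bar> \<le> norm g * (\<bar>t - s\<bar> * norm (q t))"
        using Cauchy_Schwarz_ineq2[of g "\<bar>t - s\<bar> *\<^sub>R q t"] du by (simp add: algebra_simps)
      ultimately have "\<bar>F (u t) - (F (u s) + (t - s) * inner g w)\<bar> \<le> \<bar>t - s\<bar> * bound t"
        by (simp add: bound_def inner_diff_right algebra_simps abs_le_iff)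
      then show "norm ((1 / norm (t - s)) *\<^sub>R (F (u t) - (F (u s) + (t - s) * inner g w))) \<le> bound t"
        using t by (simp add: divide_le_eq mult.commute)
    qed
  qed
  then show ?thesis
    unfolding has_vector_derivative_def has_derivative_within by (simp add: bounded_linear_mult_left)
qed

lemma frechet_chain_rule_integral:
  fixes F :: "'a::real_inner \<Rightarrow> real" and f R :: "'a \<Rightarrow> 'a" and u w :: "real \<Rightarrow> 'a"
  assumes R: "lin_op_on DR R"
    and Fd: "\<forall>x\<in>DR. \<forall>\<epsilon>>0. \<exists>\<delta>>0. \<forall>v\<in>DR. norm (R v) < \<delta> \<longrightarrow>
               \<bar>F (x + v) - F x - inner (f x) v\<bar> \<le> \<epsilon> * norm (R v)"
    and f_lip: "\<forall>K>0. \<exists>L. \<forall>x\<in>DR. \<forall>y\<in>DR. norm (R x) \<le> K \<and> norm (R y) \<le> K \<longrightarrow>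
               norm (f x - f y) \<le> L * norm (R (x - y))"
    and "a \<le> B" and uD: "\<And>s. s \<in> {a..B} \<Longrightarrow> u s \<in> DR"
    and cRu: "continuous_on {a..B} (\<lambda>s. R (u s))"
    and der: "\<And>s. s \<in> {a..B} \<Longrightarrow> (u has_vector_derivative w s) (at s within {a..B})"
  shows "((\<lambda>s. inner (f (u s)) (w s)) has_integral F (u B) - F (u a)) {a..B}"
proof -
  obtain Kb where Kb: "\<And>s. s \<in> {a..B} \<Longrightarrow> norm (R (u s)) \<le> Kb" "0 \<le> Kb"
    using bounded_on_interval[OF cRu] by metis
  then obtain L where L: "\<forall>x\<in>DR. \<forall>y\<in>DR. norm (R x) \<le> Kb + 1 \<and> norm (R y) \<le> Kb + 1 \<longrightarrow>
      norm (f x - f y) \<le> L * norm (R (x - y))"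
    using f_lip[rule_format, of "Kb + 1"] by auto
  have lip: "norm (f x - f y) \<le> max L 0 * norm (R (x - y))"
    if "x \<in> DR" "y \<in> DR" "norm (R x) \<le> Kb + 1" "norm (R y) \<le> Kb + 1" for x y
    using L that by (meson max.cobounded1 mult_right_mono norm_ge_zero order_trans)
  have taylor: "\<bar>F (u t) - F (u s) - inner (f (u s)) (u t - u s)\<bar>
      \<le> max L 0 * norm (R (u t) - R (u s)) * norm (u t - u s)" if "s \<in> {a..B}" "t \<in> {a..B}" for s t
    using frechet_taylor_remainder[OF R Fd lip, where x = "u s" and v = "u t - u s"] Kb(1)[OF that(1)] Kb(1)[OF that(2)]
      uD[OF that(1)] uD[OF that(2)] lin_op_on_subspace[OF R]
    by (simp add: subspace_diff lin_op_on_diff[OF R])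
  show ?thesis
  proof (rule fundamental_theorem_of_calculus[OF \<open>a \<le> B\<close>])
    fix s assume s: "s \<in> {a..B}"
    show "((\<lambda>s. F (u s)) has_vector_derivative inner (f (u s)) (w s)) (at s within {a..B})"
      using s cRu by (intro has_vector_derivative_comp_taylor[OF taylor[OF s] _ der[OF s]])
        (auto simp: continuous_on_eq_continuous_within)
  qed
qed

lemma adjoint_norm_le:
  fixes T :: "'a::real_inner \<Rightarrow>\<^sub>L 'b::real_inner" and S :: "'b \<Rightarrow> 'a"
  assumes "\<And>x y. inner (blinfun_apply T x) y = inner x (S y)"
  shows "norm (S y) \<le> norm T * norm y"
proof -
  have "norm (S y) * norm (S y) = inner (blinfun_apply T (S y)) y"
    by (simp add: assms power2_norm_eq_inner[symmetric] power2_eq_square)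
  also have "\<dots> \<le> norm T * norm (S y) * norm y"
    by (meson Cauchy_Schwarz_ineq2 abs_le_D1 mult_right_mono norm_blinfun norm_ge_zero order_trans)
  finally show ?thesis
    by (cases "norm (S y) = 0") (auto simp: algebra_simps mult_le_cancel_left)
qed

lemma adjoint_diff:
  fixes T :: "'a::real_inner \<Rightarrow>\<^sub>L 'b::real_inner" and S :: "'b \<Rightarrow> 'a"
  assumes "\<And>x y. inner (blinfun_apply T x) y = inner x (S y)"
  shows "S (y1 - y2) = S y1 - S y2"
proof -
  define z where "z = S (y1 - y2) - (S y1 - S y2)"
  have "inner z z = inner z (S (y1 - y2)) - inner z (S y1) + inner z (S y2)"
    by (subst (2) z_def) (simp add: inner_diff_right)
  also have "\<dots> = inner (blinfun_apply T z) (y1 - y2) - inner (blinfun_apply T z) y1 + inner (blinfun_apply T z) y2"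
    by (simp add: assms)
  also have "\<dots> = 0" by (simp add: inner_diff_right)
  finally show ?thesis by (simp add: z_def)
qed

lemma continuous_extension_adjoint_apply:
  fixes g :: "real \<Rightarrow> 'u::{real_inner,complete_space} \<Rightarrow>\<^sub>L 'h::real_inner"
    and S :: "real \<Rightarrow> 'h \<Rightarrow> 'u" and w :: "real \<Rightarrow> 'h"
  assumes "a < B" and cg: "continuous_on {a..B} g" and cw: "continuous_on {a..B} w"
    and adj: "\<And>s x y. s \<in> {a..<B} \<Longrightarrow> inner (blinfun_apply (g s) x) y = inner x (S s y)"
  obtains P where "continuous_on {a..B} P" "\<And>s. s \<in> {a..<B} \<Longrightarrow> P s = S s (w s)"
proof -
  obtain Gb where Gb: "\<And>s. s \<in> {a..B} \<Longrightarrow> norm (g s) \<le> Gb" "0 \<le> Gb"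
    using bounded_on_interval[OF cg] by metis
  obtain Wb where Wb: "\<And>s. s \<in> {a..B} \<Longrightarrow> norm (w s) \<le> Wb" "0 \<le> Wb"
    using bounded_on_interval[OF cw] by metis
  have "uniformly_continuous_on {a..B} (\<lambda>s. (g s, w s))"
    using cg cw by (intro compact_uniformly_continuous continuous_on_Pair) auto
  moreover have "dist (S y (w y)) (S x (w x)) \<le> (Wb + Gb) * dist (g y, w y) (g x, w x)"
    if "x \<in> {a..<B}" "y \<in> {a..<B}" for x y
  proof -
    have "S x (w y - w x) = S x (w y) - S x (w x)"
      by (rule adjoint_diff[OF adj[OF that(1)]])
    then have "S y (w y) - S x (w x) = (S y (w y) - S x (w y)) + S x (w y - w x)"
      by simp
    also have "norm \<dots> \<le> norm (g y - g x) * norm (w y) + norm (g x) * norm (w y - w x)"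
      using adj that
      by (intro order_trans[OF norm_triangle_ineq] add_mono adjoint_norm_le)
        (simp_all add: blinfun.diff_left inner_diff_left inner_diff_right)
    also have "\<dots> \<le> dist (g y, w y) (g x, w x) * Wb + Gb * dist (g y, w y) (g x, w x)"
      using that Gb Wb dist_fst_le[of "(g y, w y)" "(g x, w x)"] dist_snd_le[of "(g y, w y)" "(g x, w x)"]
      by (intro add_mono mult_mono) (auto simp: dist_norm)
    finally show ?thesis by (simp add: dist_norm algebra_simps)
  qed
  ultimately have "uniformly_continuous_on {a..<B} (\<lambda>s. S s (w s))"
    by (rule uniformly_continuous_on_dominated) auto
  then obtain P where "uniformly_continuous_on (closure {a..<B}) P" "\<And>s. s \<in> {a..<B} \<Longrightarrow> S s (w s) = P s"
    using uniformly_continuous_on_extension_on_closure by metis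
  then show ?thesis
    using that[of P] \<open>a < B\<close> uniformly_continuous_imp_continuous by fastforce
qed

lemma weak_sol_on_subinterval:
  assumes ws: "weak_sol_on DR R f G a b u ut" and "a \<le> a'" "a' \<le> b'" "b' \<le> b"
  shows "weak_sol_on DR R f G a' b' u ut"
proof -
  have sub: "{a'..b'} \<subseteq> {a..b}" using assms(2,4) by auto
  have "(u has_vector_derivative ut s) (at s within {a'..b'})" if "s \<in> {a'..b'}" for s
    using ws sub that unfolding weak_sol_on_def by (meson has_vector_derivative_within_subset subsetD)
  then show ?thesis
    using ws sub assms(2-4) unfolding weak_sol_on_def by (auto intro: continuous_on_subset)
qed

lemma weak_sol_on_cong:
  assumes "weak_sol_on DR R f G a b u ut" "\<And>s. s \<in> {a..<b} \<Longrightarrow> G s = G' s"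
  shows "weak_sol_on DR R f G' a b u ut"
  unfolding weak_sol_on_def
proof (intro conjI ballI allI impI)
  fix v s r assume v: "v \<in> DR" and sr: "a \<le> s \<and> s \<le> r \<and> r \<le> b"
  have "((\<lambda>\<sigma>. inner (f (u \<sigma>)) v - inner (R (u \<sigma>)) (R v) - inner (G \<sigma>) v)
      has_integral (inner (ut r) v - inner (ut s) v)) {s..r}"
    using assms(1) v sr unfolding weak_sol_on_def by blast
  then show "((\<lambda>\<sigma>. inner (f (u \<sigma>)) v - inner (R (u \<sigma>)) (R v) - inner (G' \<sigma>) v)
      has_integral (inner (ut r) v - inner (ut s) v)) {s..r}"
    by (rule has_integral_spike_finite[of "{b}", rotated 2]) (use sr assms(2) in auto)
qed (insert assms(1), unfold weak_sol_on_def, blast+)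

lemma weak_sol_on_drop_vanishing:
  assumes "\<forall>b\<ge>0. weak_sol_on DR R f (\<lambda>s. G s + K s) 0 b u ut" "0 \<le> a" "a \<le> B"
    and "\<And>s. s \<in> {a..<B} \<Longrightarrow> K s = 0"
  shows "weak_sol_on DR R f G a B u ut"
proof (rule weak_sol_on_cong)
  show "weak_sol_on DR R f (\<lambda>s. G s + K s) a B u ut"
    using weak_sol_on_subinterval[OF assms(1)[rule_format, of B] assms(2,3) order_refl] assms(2,3)
    by simp
qed (simp add: assms(4))

lemma continuous_on_lipschitz_comp:
  fixes f R :: "'a::real_inner \<Rightarrow> 'a" and u :: "real \<Rightarrow> 'a"
  assumes R: "lin_op_on DR R"
    and f_lip: "\<forall>K>0. \<exists>L. \<forall>x\<in>DR. \<forall>y\<in>DR. norm (R x) \<le> K \<and> norm (R y) \<le> K \<longrightarrow>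
               norm (f x - f y) \<le> L * norm (R (x - y))"
    and uD: "\<And>s. s \<in> {a..b} \<Longrightarrow> u s \<in> DR" and cRu: "continuous_on {a..b} (\<lambda>s. R (u s))"
  shows "continuous_on {a..b} (\<lambda>s. f (u s))"
proof -
  obtain K where K: "\<And>s. s \<in> {a..b} \<Longrightarrow> norm (R (u s)) \<le> K" "0 \<le> K"
    using bounded_on_interval[OF cRu] by metis
  obtain L where "\<forall>x\<in>DR. \<forall>y\<in>DR. norm (R x) \<le> K + 1 \<and> norm (R y) \<le> K + 1 \<longrightarrow>
      norm (f x - f y) \<le> L * norm (R (x - y))"
    using f_lip[rule_format, of "K + 1"] K(2) by auto
  then have dom: "dist (f (u y)) (f (u x)) \<le> L * dist (R (u y)) (R (u x))" if "x \<in> {a..b}" "y \<in> {a..b}" for x y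
    using K(1)[OF that(1)] K(1)[OF that(2)] uD[OF that(1)] uD[OF that(2)]
    by (simp add: dist_norm lin_op_on_diff[OF R])
  have "uniformly_continuous_on {a..b} (\<lambda>s. R (u s))"
    using cRu by (rule compact_uniformly_continuous) simp
  from uniformly_continuous_on_dominated[OF this dom order_refl]
  show ?thesis by (rule uniformly_continuous_imp_continuous)
qed

lemma weak_sol_energy_identity:
  fixes DR :: "'h::{real_inner,complete_space} set" and R f :: "'h \<Rightarrow> 'h" and F :: "'h \<Rightarrow> real"
  assumes R: "lin_op_on DR R"
    and Fd: "\<forall>x\<in>DR. \<forall>\<epsilon>>0. \<exists>\<delta>>0. \<forall>v\<in>DR. norm (R v) < \<delta> \<longrightarrow>
               \<bar>F (x + v) - F x - inner (f x) v\<bar> \<le> \<epsilon> * norm (R v)"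
    and f_lip: "\<forall>K>0. \<exists>L. \<forall>x\<in>DR. \<forall>y\<in>DR. norm (R x) \<le> K \<and> norm (R y) \<le> K \<longrightarrow>
               norm (f x - f y) \<le> L * norm (R (x - y))"
    and ws: "weak_sol_on DR R f G a B u ut" and "a < B" and cG: "continuous_on {a..B} G"
  shows "((\<lambda>s. inner (G s) (ut s)) has_integral energy R F u ut a - energy R F u ut B) {a..B}"
proof -
  have uD: "\<And>s. s \<in> {a..B} \<Longrightarrow> u s \<in> DR" and cRu: "continuous_on {a..B} (\<lambda>s. R (u s))"
    and der: "\<And>s. s \<in> {a..B} \<Longrightarrow> (u has_vector_derivative ut s) (at s within {a..B})"
    and cut: "continuous_on {a..B} ut"
    and weak: "\<And>v s r. v \<in> DR \<Longrightarrow> a \<le> s \<Longrightarrow> s \<le> r \<Longrightarrow> r \<le> B \<Longrightarrow>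
      ((\<lambda>\<sigma>. inner (f (u \<sigma>)) v - inner (R (u \<sigma>)) (R v) - inner (G \<sigma>) v)
         has_integral (inner (ut r) v - inner (ut s) v)) {s..r}"
    using ws unfolding weak_sol_on_def by blast+
  have cfu: "continuous_on {a..B} (\<lambda>s. f (u s))"
    by (rule continuous_on_lipschitz_comp[OF R f_lip uD cRu])
  have "((\<lambda>s. inner (f (u s) - G s) (ut s)) has_integral
      ((norm (ut B))\<^sup>2 + (norm (R (u B)))\<^sup>2 - (norm (ut a))\<^sup>2 - (norm (R (u a)))\<^sup>2) / 2) {a..B}"
  proof (rule energy_identity_on_interval[OF \<open>a < B\<close> der cut cRu continuous_on_diff[OF cfu cG]])
    fix x y assume xy: "a \<le> x" "x \<le> y" "y \<le> B"
    have "u y - u x \<in> DR" using xy uD lin_op_on_subspace[OF R] by (simp add: subspace_diff)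
    from weak[OF this xy] show "((\<lambda>\<sigma>. inner (f (u \<sigma>) - G \<sigma>) (u y - u x) - inner (R (u \<sigma>)) (R (u y) - R (u x)))
        has_integral inner (ut y - ut x) (u y - u x)) {x..y}"
      using xy uD by (simp add: lin_op_on_diff[OF R] inner_diff_left algebra_simps)
  qed
  from has_integral_diff[OF frechet_chain_rule_integral[OF R Fd f_lip _ uD cRu der] this] \<open>a < B\<close>
  have "((\<lambda>s. inner (G s) (ut s)) has_integral F (u B) - F (u a) -
      ((norm (ut B))\<^sup>2 + (norm (R (u B)))\<^sup>2 - (norm (ut a))\<^sup>2 - (norm (R (u a)))\<^sup>2) / 2) {a..B}"
    by (simp add: inner_diff_left)
  moreover have "F (u B) - F (u a) - ((norm (ut B))\<^sup>2 + (norm (R (u B)))\<^sup>2 - (norm (ut a))\<^sup>2 - (norm (R (u a)))\<^sup>2) / 2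
      = energy R F u ut a - energy R F u ut B"
    by (simp add: energy_def field_simps)
  ultimately show ?thesis by simp
qed

text \<open>Only g, which agrees with D on [a, B), is continuous up to B; the feedback Ds u_t is extended
to B by uniform continuity.\<close>

lemma damped_weak_sol_dissipation:
  fixes DR :: "'h::{real_inner,complete_space} set" and R f :: "'h \<Rightarrow> 'h" and F :: "'h \<Rightarrow> real"
    and D g :: "real \<Rightarrow> 'u::{real_inner,complete_space} \<Rightarrow>\<^sub>L 'h" and Ds :: "real \<Rightarrow> 'h \<Rightarrow> 'u"
  assumes R: "lin_op_on DR R"
    and Fd: "\<forall>x\<in>DR. \<forall>\<epsilon>>0. \<exists>\<delta>>0. \<forall>v\<in>DR. norm (R v) < \<delta> \<longrightarrow>
               \<bar>F (x + v) - F x - inner (f x) v\<bar> \<le> \<epsilon> * norm (R v)"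
    and f_lip: "\<forall>K>0. \<exists>L. \<forall>x\<in>DR. \<forall>y\<in>DR. norm (R x) \<le> K \<and> norm (R y) \<le> K \<longrightarrow>
               norm (f x - f y) \<le> L * norm (R (x - y))"
    and ws: "weak_sol_on DR R f (\<lambda>s. blinfun_apply (D s) (Ds s (ut s))) a B u ut" and "a < B"
    and adj: "\<And>s x y. inner (blinfun_apply (D s) x) y = inner x (Ds s y)"
    and cg: "continuous_on {a..B} g" and g: "\<And>s. s \<in> {a..<B} \<Longrightarrow> g s = D s"
  shows "((\<lambda>s. (norm (Ds s (ut s)))\<^sup>2) has_integral energy R F u ut a - energy R F u ut B) {a..B}"
proof -
  have cut: "continuous_on {a..B} ut" using ws by (simp add: weak_sol_on_def)
  obtain P where cP: "continuous_on {a..B} P" and P: "\<And>s. s \<in> {a..<B} \<Longrightarrow> P s = Ds s (ut s)"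
    using continuous_extension_adjoint_apply[OF \<open>a < B\<close> cg cut] adj g by metis
  have "weak_sol_on DR R f (\<lambda>s. blinfun_apply (g s) (P s)) a B u ut"
    using ws by (rule weak_sol_on_cong) (simp add: g P)
  from weak_sol_energy_identity[OF R Fd f_lip this \<open>a < B\<close>]
  have "((\<lambda>s. inner (blinfun_apply (g s) (P s)) (ut s)) has_integral energy R F u ut a - energy R F u ut B) {a..B}"
    using cg cP by (auto intro!: continuous_intros)
  then show ?thesis
    by (rule has_integral_spike_finite[of "{B}", rotated 2])
      (auto simp: g P adj power2_norm_eq_inner)
qed

theorem proposition3p10:
  fixes DA DR :: "'h::{real_inner,complete_space} set"
    and A R f :: "'h \<Rightarrow> 'h"
    and F :: "'h \<Rightarrow> real"
    and jW :: "'h \<Rightarrow> 'w::{real_inner,complete_space}"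
    and CW :: real
    and B1 :: "real \<Rightarrow> 'u1::{real_inner,complete_space} \<Rightarrow>\<^sub>L 'h"
    and B1s :: "real \<Rightarrow> 'h \<Rightarrow> 'u1"
    and B2 :: "real \<Rightarrow> 'u2::{real_inner,complete_space} \<Rightarrow>\<^sub>L 'h"
    and B2s :: "real \<Rightarrow> 'h \<Rightarrow> 'u2"
    and t :: "nat \<Rightarrow> real"
    and tau :: real
    and m M :: "nat \<Rightarrow> real"
    and Tbar d :: "nat \<Rightarrow> real"
    and u ut :: "real \<Rightarrow> 'h"
    and u0 u1 :: 'h
  assumes A_sa: "selfadjoint_op DA A"
    and A_pos: "positive_op DA A"
    and A_coer: "coercive_op DA A"
    and R_sqrt: "is_sqrt_op DA A DR R"
    \<comment> \<open>W: Hilbert space with H embedded, ||u||_W^2 \<le> C ||u||_H^2\<close>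
    and jW_lin: "linear jW" and jW_inj: "inj jW"
    and jW_bd: "\<forall>x. (norm (jW x))\<^sup>2 \<le> CW * (norm x)\<^sup>2"
    \<comment> \<open>f : V \<rightarrow> H locally Lipschitz\<close>
    and f_lip: "\<forall>K>0. \<exists>L. \<forall>x\<in>DR. \<forall>y\<in>DR. norm (R x) \<le> K \<and> norm (R y) \<le> K \<longrightarrow>
                   norm (f x - f y) \<le> L * norm (R (x - y))"
    \<comment> \<open>F(0) = 0 and F'(u) v = <f(u), v> (Frechet derivative on V)\<close>
    and F0: "F 0 = 0"
    and F_deriv: "\<forall>x\<in>DR. \<forall>\<epsilon>>0. \<exists>\<delta>>0. \<forall>v\<in>DR. norm (R v) < \<delta> \<longrightarrow>
                   \<bar>F (x + v) - F x - inner (f x) v\<bar> \<le> \<epsilon> * norm (R v)"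
    \<comment> \<open>adjoints\<close>
    and B1s_adj: "\<forall>s x y. inner (blinfun_apply (B1 s) x) y = inner x (B1s s y)"
    and B2s_adj: "\<forall>s x y. inner (blinfun_apply (B2 s) x) y = inner x (B2s s y)"
    and B_prod: "\<forall>s>0. \<forall>x. blinfun_apply (B1 s) (B1s s (blinfun_apply (B2 s) (B2s s x))) = 0"
    \<comment> \<open>switching sequence\<close>
    and t0: "t 0 = 0" and t_mono: "strict_mono t"
    and B2_off: "\<forall>n. \<forall>s\<in>{t (2*n)..<t (2*n+1)}. B2 s = 0"
    and B1_off: "\<forall>n. \<forall>s\<in>{t (2*n+1)..<t (2*n+2)}. B1 s = 0"
    and B1_C1: "\<forall>n. \<exists>g g'. (\<forall>s\<in>{t (2*n)..<t (2*n+1)}. g s = B1 s) \<and>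
                  (\<forall>s\<in>{t (2*n)..t (2*n+1)}. (g has_vector_derivative g' s) (at s within {t (2*n)..t (2*n+1)})) \<and>
                  continuous_on {t (2*n)..t (2*n+1)} g'"
    and B2_C1: "\<forall>n. \<exists>g g'. (\<forall>s\<in>{t (2*n+1)..<t (2*n+2)}. g s = B2 s) \<and>
                  (\<forall>s\<in>{t (2*n+1)..t (2*n+2)}. (g has_vector_derivative g' s) (at s within {t (2*n+1)..t (2*n+2)})) \<and>
                  continuous_on {t (2*n+1)..t (2*n+2)} g'"
    and tau_pos: "tau > 0"
    \<comment> \<open>condition (i)\<close>
    and cond_i: "\<forall>n. 0 < m n \<and> m n \<le> M n \<and>
                  (\<forall>s\<in>{t (2*n)..<t (2*n+1)}. \<forall>x.
                     m n * (norm (jW x))\<^sup>2 \<le> (norm (B1s s x))\<^sup>2 \<and>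
                     (norm (B1s s x))\<^sup>2 \<le> M n * (norm (jW x))\<^sup>2)"
    \<comment> \<open>observability on the undelayed intervals\<close>
    and Tbar_lt: "\<forall>n. Tbar n < t (2*n+1) - t (2*n)"
    and obs: "\<forall>n. \<forall>T. Tbar n < T \<and> T \<le> t (2*n+1) - t (2*n) \<longrightarrow>
               (\<exists>c>0. \<forall>w wt. weak_sol_on DR R f (\<lambda>s. blinfun_apply (B1 s) (B1s s (wt s)))
                                 (t (2*n)) (t (2*n+1)) w wt \<longrightarrow>
                  energy R F w wt (t (2*n) + T)
                    \<le> c * integral {t (2*n)..t (2*n) + T} (\<lambda>s. (norm (B1s s (wt s)))\<^sup>2))"
    and d_pos: "\<forall>n. d n > 0"
    and obs_d: "\<forall>n. \<forall>w wt. weak_sol_on DR R f (\<lambda>s. blinfun_apply (B1 s) (B1s s (wt s)))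
                                 (t (2*n)) (t (2*n+1)) w wt \<longrightarrow>
                  energy R F w wt (t (2*n+1))
                    \<le> d n * integral {t (2*n)..t (2*n+1)} (\<lambda>s. (norm (B1s s (wt s)))\<^sup>2)"
    \<comment> \<open>u is a (global) solution of the switched delayed problem\<close>
    and u_sol: "\<forall>b\<ge>0. weak_sol_on DR R f
                  (\<lambda>s. blinfun_apply (B1 s) (B1s s (ut s)) + blinfun_apply (B2 s) (B2s s (ut (s - tau))))
                  0 b u ut"
    and u_init: "u 0 = u0" "ut 0 = u1" "u0 \<in> DR"
  shows "\<forall>n. energy R F u ut (t (2*n+1)) \<le> (d n / (d n + 1)) * energy R F u ut (t (2*n))"
proof
  fix n
  define a B where "a = t (2*n)" and "B = t (2*n+1)"
  have "a < B" "0 \<le> a"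
    using t_mono t0 strict_mono_less_eq[OF t_mono, of 0 "2*n"] unfolding a_def B_def strict_mono_def by auto
  have R: "lin_op_on DR R"
    using R_sqrt unfolding is_sqrt_op_def selfadjoint_op_def by blast
  have ws: "weak_sol_on DR R f (\<lambda>s. blinfun_apply (B1 s) (B1s s (ut s))) a B u ut"
  proof (rule weak_sol_on_drop_vanishing[OF u_sol \<open>0 \<le> a\<close>])
    show "blinfun_apply (B2 s) (B2s s (ut (s - tau))) = 0" if "s \<in> {a..<B}" for s
      using B2_off that unfolding a_def B_def by simp
  qed (use \<open>a < B\<close> in simp)
  obtain g g' where g: "\<And>s. s \<in> {a..<B} \<Longrightarrow> g s = B1 s"
    and g': "\<And>s. s \<in> {a..B} \<Longrightarrow> (g has_vector_derivative g' s) (at s within {a..B})"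
    using B1_C1 unfolding a_def B_def by blast
  have cg: "continuous_on {a..B} g"
    by (rule continuous_on_vector_derivative) (rule g')
  have "((\<lambda>s. (norm (B1s s (ut s)))\<^sup>2) has_integral energy R F u ut a - energy R F u ut B) {a..B}"
    using B1s_adj
    by (intro damped_weak_sol_dissipation[where D = B1 and Ds = B1s and ut = ut,
          OF R F_deriv f_lip ws \<open>a < B\<close> _ cg g]) auto
  moreover have "energy R F u ut B \<le> d n * integral {a..B} (\<lambda>s. (norm (B1s s (ut s)))\<^sup>2)"
    using obs_d ws unfolding a_def B_def by blast
  ultimately have "energy R F u ut B \<le> d n * (energy R F u ut a - energy R F u ut B)"
    by (simp add: integral_unique)
  then show "energy R F u ut (t (2*n+1)) \<le> (d n / (d n + 1)) * energy R F u ut (t (2*n))"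
    using d_pos[rule_format, of n] by (simp add: a_def B_def field_simps)
qed

end
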